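(* Let $p$ be a prime, $A$ a commutative ring with $\mathbb{Q}\subseteq A$, and $|$ a $p$-archimedean $p$-divisibility on $A$. For $a\in A$ put $\mathrm{ord}\,a=\sup\{m\in\mathbb{Z};\ p^m|a\}\in\mathbb{Z}\cup\{\infty\}$ and $\|a\|=p^{-\mathrm{ord}\,a}$ (with $p^{-\infty}=0$). Then for all $a,b\in A$ and $r\in\mathbb{Q}$: (a) $\|a+b\|\le\max(\|a\|,\|b\|)$; (b) $\|ab\|\le\|a\|\,\|b\|$; (c) $\|r\|=|r|_p$; (d) $\|ra\|=|r|_p\|a\|$.
   Context: A divisibility on $A$ is a binary relation $|\subseteq A\times A$ such that for all $a,b,c$: (1) $a|a$; (2) $a|b,\ b|c\Rightarrow a|c$; (3) $a|b,\ a|c\Rightarrow a|b-c$; (4) $a|b\Rightarrow ac|bc$; (5) $0\nmid1$. A $p$-divisibility additionally satisfies for all $a,b$: (6) $0\nmid a\Rightarrow pa\nmid a$; (7) $p[(a^pb-b^pa)^2-(b^{p+1})^2]\ \big|\ (a^pb-b^pa)b^{p+1}$. It is $p$-archimedean if for every $a$ there is $m\in\mathbb{Z}$ with $p^m|a$. $|r|_p=p^{-v_p(r)}$ is the $p$-adic absolute value. *)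

theory Defs
  imports Complex_Main "HOL-Library.Extended_Real" "HOL-Computational_Algebra.Primes"
begin

definition contains_rat :: "'a::comm_ring_1 itself \<Rightarrow> bool" where
  "contains_rat _ \<longleftrightarrow> (\<forall>n::nat. n > 0 \<longrightarrow> (\<exists>x::'a. of_nat n * x = 1))"

text \<open>The canonical embedding of Q into A (inverse of the denominator chosen by SOME;
  it is unique in a commutative ring).\<close>
definition rat_emb :: "rat \<Rightarrow> 'a::comm_ring_1" where
  "rat_emb r = (let (n, d) = quotient_of r in of_int n * (SOME y. of_int d * y = 1))"

definition ppow :: "nat \<Rightarrow> int \<Rightarrow> 'a::comm_ring_1" where
  "ppow p m = rat_emb ((of_nat p :: rat) powi m)"

definition divisibility :: "('a::comm_ring_1 \<Rightarrow> 'a \<Rightarrow> bool) \<Rightarrow> bool" where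
  "divisibility dv \<longleftrightarrow>
     (\<forall>a. dv a a) \<and>
     (\<forall>a b c. dv a b \<longrightarrow> dv b c \<longrightarrow> dv a c) \<and>
     (\<forall>a b c. dv a b \<longrightarrow> dv a c \<longrightarrow> dv a (b - c)) \<and>
     (\<forall>a b c. dv a b \<longrightarrow> dv (a * c) (b * c)) \<and>
     \<not> dv 0 1"

definition p_divisibility :: "nat \<Rightarrow> ('a::comm_ring_1 \<Rightarrow> 'a \<Rightarrow> bool) \<Rightarrow> bool" where
  "p_divisibility p dv \<longleftrightarrow> divisibility dv \<and>
     (\<forall>a. \<not> dv 0 a \<longrightarrow> \<not> dv (of_nat p * a) a) \<and>
     (\<forall>a b. dv (of_nat p * ((a ^ p * b - b ^ p * a) ^ 2 - (b ^ (p + 1)) ^ 2))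
               ((a ^ p * b - b ^ p * a) * b ^ (p + 1)))"

definition p_archimedean :: "nat \<Rightarrow> ('a::comm_ring_1 \<Rightarrow> 'a \<Rightarrow> bool) \<Rightarrow> bool" where
  "p_archimedean p dv \<longleftrightarrow> (\<forall>a. \<exists>m::int. dv (ppow p m) a)"

definition ord_dv :: "nat \<Rightarrow> ('a::comm_ring_1 \<Rightarrow> 'a \<Rightarrow> bool) \<Rightarrow> 'a \<Rightarrow> ereal" where
  "ord_dv p dv a = Sup ((\<lambda>m. ereal (real_of_int m)) ` {m::int. dv (ppow p m) a})"

definition norm_dv :: "nat \<Rightarrow> ('a::comm_ring_1 \<Rightarrow> 'a \<Rightarrow> bool) \<Rightarrow> 'a \<Rightarrow> real" where
  "norm_dv p dv a = (if ord_dv p dv a = \<infinity> then 0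
                     else real p powr (- real_of_ereal (ord_dv p dv a)))"

definition padic_val :: "nat \<Rightarrow> rat \<Rightarrow> int" where
  "padic_val p r = (let (n, d) = quotient_of r in
      int (multiplicity (int p) n) - int (multiplicity (int p) d))"

definition padic_abs :: "nat \<Rightarrow> rat \<Rightarrow> real" where
  "padic_abs p r = (if r = 0 then 0 else real p powr (- real_of_int (padic_val p r)))"

end

theory Submission
  imports Defs
begin

text \<open>The set \<open>{m. p\<^sup>m | a}\<close> is downward closed and nonempty, so it is either \<open>\<int>\<close> or some
  \<open>{..M}\<close>; accordingly \<open>\<parallel>a\<parallel>\<close> is \<open>0\<close> or \<open>p\<^sup>-\<^sup>M\<close>, and \<open>\<parallel>a\<parallel> \<le> p\<^sup>m \<longleftrightarrow> p\<^sup>-\<^sup>m | a\<close>. As norms take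
  values in \<open>p\<^sup>\<int> \<union> {0}\<close>, every claimed (in)equality reduces to divisibility statements:
  the ultrametric inequality to \<open>p\<^sup>m | a, p\<^sup>m | b \<Longrightarrow> p\<^sup>m | a + b\<close>, submultiplicativity to
  \<open>p\<^sup>m | a, p\<^sup>n | b \<Longrightarrow> p\<^sup>m\<^sup>+\<^sup>n | a b\<close>. For a rational \<open>r = p\<^sup>v u\<close> with \<open>u\<close> a \<open>p\<close>-adic unit,
  both \<open>u\<close> and \<open>1/u\<close> satisfy \<open>1 | u\<close>, so \<open>p\<^sup>m | r a \<longleftrightarrow> p\<^sup>m\<^sup>-\<^sup>v | a\<close>; together with
  \<open>p \<nmid> 1\<close>, which is axiom (6), this gives \<open>\<parallel>r a\<parallel> = |r|\<^sub>p \<parallel>a\<parallel>\<close> and \<open>\<parallel>1\<parallel> = 1\<close>.\<close>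

definition powers_or_zero :: "real \<Rightarrow> real set" where
  "powers_or_zero b = insert 0 (range (\<lambda>n::int. b powr n))"

lemma powers_or_zero_mult:
  "x \<in> powers_or_zero b \<Longrightarrow> y \<in> powers_or_zero b \<Longrightarrow> x * y \<in> powers_or_zero b"
  by (auto simp: powers_or_zero_def powr_add[symmetric] simp flip: of_int_add)

lemma powers_or_zero_max:
  "x \<in> powers_or_zero b \<Longrightarrow> y \<in> powers_or_zero b \<Longrightarrow> max x y \<in> powers_or_zero b"
  by (simp add: max_def)

lemma le_if_powr_bounds:
  fixes b x y :: real
  assumes "b > 1" and "y \<in> powers_or_zero b"
    and bounds: "\<And>m::int. y \<le> b powr m \<Longrightarrow> x \<le> b powr m"
  shows "x \<le> y"
  using assms(2) unfolding powers_or_zero_def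
proof
  assume y: "y = 0"
  show "x \<le> y"
  proof (rule ccontr)
    assume "\<not> x \<le> y"
    then obtain n where "(1 / b) ^ n < x" using real_arch_pow_inv[of x "1 / b"] y \<open>b > 1\<close> by auto
    moreover have "x \<le> b powr - real n" using bounds[of "- int n"] y by simp
    ultimately show False using \<open>b > 1\<close> by (simp add: powr_minus powr_realpow power_divide inverse_eq_divide)
  qed
next
  assume "y \<in> range (\<lambda>n::int. b powr n)"
  then show "x \<le> y" using bounds by auto
qed

lemma eq_if_same_powr_bounds:
  fixes b x y :: real
  assumes "b > 1" and "x \<in> powers_or_zero b" and "y \<in> powers_or_zero b"
    and "\<And>m::int. x \<le> b powr m \<longleftrightarrow> y \<le> b powr m"
  shows "x = y"
proof (rule antisym)
  show "x \<le> y" by (rule le_if_powr_bounds[OF assms(1,3)]) (use assms(4) in blast)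
  show "y \<le> x" by (rule le_if_powr_bounds[OF assms(1,2)]) (use assms(4) in blast)
qed

lemma int_downset_cases:
  fixes S :: "int set"
  assumes "S \<noteq> {}" and down: "\<And>m k. m \<in> S \<Longrightarrow> k \<le> m \<Longrightarrow> k \<in> S"
  shows "S = UNIV \<or> (\<exists>M. S = {..M})"
proof (cases "bdd_above S")
  case True
  obtain x where "x \<in> S" "Sup S - 1 < x"
    using less_cSupE[of "Sup S - 1" S] \<open>S \<noteq> {}\<close> by auto
  moreover have "x \<le> Sup S" using \<open>x \<in> S\<close> True by (rule cSup_upper)
  ultimately have "x = Sup S" by linarith
  with \<open>x \<in> S\<close> have "Sup S \<in> S" by simp
  then have "S = {..Sup S}" using down cSup_upper[OF _ True] by auto
  then show ?thesis by blast
next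
  case False
  then have "S = UNIV" using down unfolding bdd_above_def by (metis UNIV_eq_I linorder_le_cases)
  then show ?thesis ..
qed

lemma Sup_ereal_of_int_UNIV: "Sup (range (\<lambda>m::int. ereal (of_int m))) = \<infinity>"
  by (rule SUP_PInfty) (metis UNIV_I of_int_of_nat_eq order_refl)

lemma Sup_ereal_of_int_atMost: "Sup ((\<lambda>m::int. ereal (of_int m)) ` {..M}) = ereal (of_int M)"
  by (rule Sup_eqI) auto

context
  assumes contains_rat: "contains_rat TYPE('a::comm_ring_1)"
begin

lemma contains_rat_inverse_of_int: "d > 0 \<Longrightarrow> \<exists>y::'a. of_int d * y = 1"
proof -
  assume "d > 0"
  then obtain y :: 'a where "of_nat (nat d) * y = 1"
    using contains_rat unfolding contains_rat_def by (metis zero_less_nat_eq)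
  with \<open>d > 0\<close> show ?thesis by auto
qed

lemma rat_emb_eqI:
  assumes "d > 0" and "of_int d * x = (of_int n :: 'a)" and "r = of_int n / of_int d"
  shows "rat_emb r = x"
proof -
  obtain n' d' where q: "quotient_of r = (n', d')" by (cases "quotient_of r") auto
  have "d' > 0" using quotient_of_denom_pos[OF q] .
  define y' where "y' = (SOME y. of_int d' * y = (1::'a))"
  have y': "of_int d' * y' = 1"
    unfolding y'_def using someI_ex[OF contains_rat_inverse_of_int[OF \<open>d' > 0\<close>]] .
  obtain y where y: "of_int d * y = (1::'a)" using contains_rat_inverse_of_int[OF \<open>d > 0\<close>] by blast
  have "(of_int n / of_int d :: rat) = of_int n' / of_int d'"
    using assms(3) quotient_of_div[OF q] by simp
  then have "n * d' = n' * d"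
    using \<open>d > 0\<close> \<open>d' > 0\<close> by (simp add: frac_eq_eq flip: of_int_mult)
  have "x = y * (of_int d * x)" using y by (simp add: algebra_simps)
  also have "\<dots> = of_int n * y" using assms(2) by (simp add: algebra_simps)
  finally have x: "x = of_int n * y" .
  have "rat_emb r = of_int n' * y' * (of_int d * y)" unfolding rat_emb_def q y'_def using y by simp
  also have "\<dots> = of_int (n' * d) * y' * y" by (simp add: algebra_simps)
  also have "\<dots> = of_int n * (of_int d' * y') * y" unfolding \<open>n * d' = n' * d\<close>[symmetric]
    by (simp add: algebra_simps)
  finally show ?thesis using x y' by simp
qed

lemma of_int_mult_rat_emb:
  assumes "d > 0" and "r = of_int n / of_int d"
  shows "of_int d * rat_emb r = (of_int n :: 'a)"
proof -
  obtain y where "of_int d * y = (1::'a)" using contains_rat_inverse_of_int[OF assms(1)] by blast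
  then have y: "of_int d * (of_int n * y) = (of_int n :: 'a)" by (metis mult.left_commute mult.right_neutral)
  then have "rat_emb r = (of_int n * y :: 'a)" by (rule rat_emb_eqI[OF assms(1) _ assms(2)])
  with y show ?thesis by simp
qed

lemma rat_emb_mult: "(rat_emb (r * s) :: 'a) = rat_emb r * rat_emb s"
proof -
  obtain n1 d1 where 1: "d1 > 0" "r = of_int n1 / of_int d1"
    by (metis quotient_of_denom_pos quotient_of_div surj_pair)
  obtain n2 d2 where 2: "d2 > 0" "s = of_int n2 / of_int d2"
    by (metis quotient_of_denom_pos quotient_of_div surj_pair)
  have "of_int (d1 * d2) * (rat_emb r * rat_emb s)
      = (of_int d1 * rat_emb r) * (of_int d2 * (rat_emb s :: 'a))"
    by (simp add: algebra_simps)
  also have "\<dots> = of_int (n1 * n2)" using of_int_mult_rat_emb[OF 1] of_int_mult_rat_emb[OF 2] by simp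
  finally show ?thesis using 1 2 by (intro rat_emb_eqI[of "d1 * d2" _ "n1 * n2"]) simp_all
qed

lemma rat_emb_of_int: "(rat_emb (of_int n) :: 'a) = of_int n"
  by (rule rat_emb_eqI[of 1]) simp_all

lemma rat_emb_inverse_mult: "r \<noteq> 0 \<Longrightarrow> (rat_emb (1 / r) :: 'a) * rat_emb r = 1"
  using rat_emb_of_int[of 1] by (simp flip: rat_emb_mult)

lemma ppow_add: "p > 0 \<Longrightarrow> (ppow p (m + k) :: 'a) = ppow p m * ppow p k"
  unfolding ppow_def by (simp add: power_int_add rat_emb_mult)

lemma ppow_of_nat: "(ppow p (int n) :: 'a) = of_nat p ^ n"
  unfolding ppow_def using rat_emb_of_int[of "int p ^ n"] by simp

lemma ppow_0: "(ppow p 0 :: 'a) = 1"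
  using ppow_of_nat[of p 0] by simp

lemma ppow_1: "(ppow p 1 :: 'a) = of_nat p"
  using ppow_of_nat[of p 1] by simp

lemma ppow_uminus_mult: "p > 0 \<Longrightarrow> (ppow p (- k) :: 'a) * ppow p k = 1"
  using ppow_add[of p "- k" k] ppow_0 by simp

end

locale divisibility_relation =
  fixes dv :: "'a::comm_ring_1 \<Rightarrow> 'a \<Rightarrow> bool"
  assumes divisibility: "divisibility dv"
begin

lemma dv_refl: "dv a a"
  and dv_trans: "dv a b \<Longrightarrow> dv b c \<Longrightarrow> dv a c"
  and dv_diff: "dv a b \<Longrightarrow> dv a c \<Longrightarrow> dv a (b - c)"
  and dv_mult_right: "dv a b \<Longrightarrow> dv (a * c) (b * c)"
  and not_dv_0_1: "\<not> dv 0 1"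
  using divisibility unfolding divisibility_def by auto

lemma dv_0: "dv a 0"
  using dv_diff[OF dv_refl dv_refl, of a] by simp

lemma dv_minus: "dv a b \<Longrightarrow> dv a (- b)"
  using dv_diff[OF dv_0, of a b] by simp

lemma dv_add: "dv a b \<Longrightarrow> dv a c \<Longrightarrow> dv a (b + c)"
  using dv_diff[of a b "- c"] dv_minus by simp

lemma dv_mult_left: "dv a b \<Longrightarrow> dv (c * a) (c * b)"
  using dv_mult_right[of a b c] by (simp add: mult.commute)

lemma dv_of_nat_mult: "dv a b \<Longrightarrow> dv a (of_nat n * b)"
  by (induction n) (simp_all add: dv_0 dv_add algebra_simps)

lemma dv_of_int_mult: "dv a b \<Longrightarrow> dv a (of_int n * b)"
  by (cases n rule: int_cases2) (simp_all add: dv_of_nat_mult dv_minus)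

lemma one_dv_of_int: "dv 1 (of_int n)"
  using dv_of_int_mult[OF dv_refl, of 1 n] by simp

lemma one_dv_mult: "dv 1 u \<Longrightarrow> dv 1 v \<Longrightarrow> dv 1 (u * v)"
  using dv_mult_right[of 1 u v] dv_trans[of 1 v "u * v"] by simp

lemma dv_unit_mult: "dv 1 u \<Longrightarrow> dv a b \<Longrightarrow> dv a (u * b)"
  using dv_mult_right[of 1 u b] dv_trans by (simp add: mult.commute)

lemma dv_unit_mult_iff:
  assumes "dv 1 u" and "dv 1 v" and "v * u = 1"
  shows "dv a (u * b) \<longleftrightarrow> dv a b"
  using dv_unit_mult[OF assms(2), of a "u * b"] dv_unit_mult[OF assms(1), of a b] assms(3)
  by (auto simp: mult.assoc[symmetric])

end

lemma rat_padic_decomposition: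
  fixes r :: rat
  assumes "prime p" and "r \<noteq> 0"
  obtains n d where "\<not> int p dvd n" and "\<not> int p dvd d" and "d \<noteq> 0"
    and "r = of_nat p powi padic_val p r * (of_int n / of_int d)"
proof -
  obtain n0 d0 where q: "quotient_of r = (n0, d0)" by (cases "quotient_of r") auto
  have r: "r = of_int n0 / of_int d0" using quotient_of_div[OF q] .
  have "n0 \<noteq> 0" "d0 \<noteq> 0" using r assms(2) quotient_of_denom_pos[OF q] by auto
  have "\<not> is_unit (int p)"
    using assms(1) prime_nat_iff_prime[of "int p"] not_prime_unit by auto
  then obtain n d where n: "n0 = int p ^ multiplicity (int p) n0 * n" "\<not> int p dvd n"
    and d: "d0 = int p ^ multiplicity (int p) d0 * d" "\<not> int p dvd d"
    using multiplicity_decompose'[OF \<open>n0 \<noteq> 0\<close>] multiplicity_decompose'[OF \<open>d0 \<noteq> 0\<close>]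
    by metis
  have "d \<noteq> 0" using d(1) \<open>d0 \<noteq> 0\<close> by auto
  have "p > 0" using assms(1) prime_gt_0_nat by blast
  have "r = (of_nat p ^ multiplicity (int p) n0 / of_nat p ^ multiplicity (int p) d0)
            * (of_int n / of_int d)"
    by (subst r, subst n(1), subst d(1)) simp
  also have "of_nat p ^ multiplicity (int p) n0 / of_nat p ^ multiplicity (int p) d0
      = (of_nat p :: rat) powi padic_val p r"
    using \<open>p > 0\<close> by (simp add: padic_val_def q power_int_diff)
  finally show ?thesis using that n(2) d(2) \<open>d \<noteq> 0\<close> by blast
qed

lemma norm_dv_eq_0: "(\<And>m. dv (ppow p m) a) \<Longrightarrow> norm_dv p dv a = 0"
  by (simp add: norm_dv_def ord_dv_def Sup_ereal_of_int_UNIV)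

lemma norm_dv_eq_powr:
  assumes "\<And>m. dv (ppow p m) a \<longleftrightarrow> m \<le> M"
  shows "norm_dv p dv a = real p powr of_int (- M)"
proof -
  have "{m. dv (ppow p m) a} = {..M}" using assms by auto
  then show ?thesis by (simp add: norm_dv_def ord_dv_def Sup_ereal_of_int_atMost)
qed

locale p_archimedean_divisibility =
  fixes p :: nat and dv :: "'a::comm_ring_1 \<Rightarrow> 'a \<Rightarrow> bool"
  assumes prime: "prime p" and contains_rat: "contains_rat TYPE('a)"
    and p_divisibility: "p_divisibility p dv" and p_archimedean: "p_archimedean p dv"
begin

sublocale divisibility_relation dv
  using p_divisibility by unfold_locales (simp add: p_divisibility_def)

lemma p_gt_0: "p > 0"
  using prime prime_gt_0_nat by blast

lemma real_p_gt_1: "real p > 1"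
  using prime prime_gt_1_nat by simp

lemma ex_dv_ppow: "\<exists>m. dv (ppow p m) a"
  using p_archimedean unfolding p_archimedean_def by blast

lemma dv_ppow_mono:
  assumes "dv (ppow p m) a" and "k \<le> m"
  shows "dv (ppow p k) a"
proof -
  have "(ppow p m :: 'a) = ppow p (m - k) * ppow p k"
    using ppow_add[OF contains_rat p_gt_0, of "m - k" k] by simp
  also have "ppow p (m - k) = (of_int (int p ^ nat (m - k)) :: 'a)"
    using ppow_of_nat[OF contains_rat, of p "nat (m - k)"] \<open>k \<le> m\<close> by simp
  finally have "dv (ppow p k) (ppow p m)"
    using dv_mult_right[OF one_dv_of_int[of "int p ^ nat (m - k)"], of "ppow p k"] by simp
  from this assms(1) show ?thesis by (rule dv_trans)
qed

lemma dv_ppow_shift: "dv (ppow p m) a \<Longrightarrow> dv (ppow p (m + k)) (ppow p k * a)"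
  using dv_mult_left[of "ppow p m" a "ppow p k"]
  by (simp add: ppow_add[OF contains_rat p_gt_0] mult.commute)

lemma dv_ppow_shift_iff: "dv (ppow p (m + k)) (ppow p k * a) \<longleftrightarrow> dv (ppow p m) a"
proof
  assume "dv (ppow p (m + k)) (ppow p k * a)"
  from dv_ppow_shift[OF this, of "- k"] show "dv (ppow p m) a"
    by (simp add: ppow_uminus_mult[OF contains_rat p_gt_0] flip: mult.assoc)
qed (rule dv_ppow_shift)

lemma dv_ppow_mult:
  assumes "dv (ppow p m) a" and "dv (ppow p n) b"
  shows "dv (ppow p (m + n)) (a * b)"
proof -
  have "dv (ppow p (m + n)) (ppow p m * b)"
    using dv_ppow_shift[OF assms(2), of m] by (simp add: add.commute)
  moreover have "dv (ppow p m * b) (a * b)" using assms(1) by (rule dv_mult_right)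
  ultimately show ?thesis by (rule dv_trans)
qed

lemma dv_ppow_one_iff: "dv (ppow p m) (1::'a) \<longleftrightarrow> m \<le> 0"
proof
  have "\<not> dv (ppow p 1) (1::'a)"
    using p_divisibility not_dv_0_1
    unfolding p_divisibility_def by (auto simp: ppow_1[OF contains_rat])
  then show "dv (ppow p m) (1::'a) \<Longrightarrow> m \<le> 0"
    using dv_ppow_mono[of m 1 1] by force
next
  show "m \<le> 0 \<Longrightarrow> dv (ppow p m) (1::'a)"
    using dv_ppow_mono[OF dv_refl] ppow_0[OF contains_rat, of p] by force
qed

text \<open>Here \<open>w = 1/t\<close> satisfies \<open>w = 1 - s p w\<close>, so \<open>p\<^sup>m | w\<close> with \<open>m < 0\<close> improves to
  \<open>p\<^sup>m\<^sup>+\<^sup>1 | w\<close>; the archimedean property provides a starting exponent.\<close>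

lemma one_dv_rat_emb_inverse:
  assumes t: "t = 1 + int p * s" "t \<noteq> 0"
  shows "dv 1 (rat_emb (1 / of_int t) :: 'a)"
proof -
  define w where "w = (rat_emb (1 / of_int t) :: 'a)"
  have "w * of_int t = 1"
    unfolding w_def using rat_emb_inverse_mult[OF contains_rat, of "of_int t"] t(2)
    by (simp add: rat_emb_of_int[OF contains_rat])
  then have w: "w = 1 - of_int s * (of_nat p * w)" unfolding t(1) by (simp add: algebra_simps)
  obtain m0 where m0: "dv (ppow p m0) w" using ex_dv_ppow by blast
  have "dv (ppow p (min 0 (m0 + int k))) w" for k
  proof (induction k)
    case 0
    then show ?case using dv_ppow_mono[OF m0] by simp
  next
    case (Suc k)
    let ?j = "min 0 (m0 + int k)"
    have "dv (ppow p (?j + 1)) (of_nat p * w)"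
      using dv_ppow_shift[OF Suc.IH, of 1] by (simp add: ppow_1[OF contains_rat])
    then have "dv (ppow p (min 0 (m0 + int (Suc k)))) (of_nat p * w)"
      by (rule dv_ppow_mono) auto
    then have "dv (ppow p (min 0 (m0 + int (Suc k)))) (1 - of_int s * (of_nat p * w))"
      by (intro dv_diff dv_of_int_mult) (simp add: dv_ppow_one_iff)
    then show ?case using w by simp
  qed
  from this[of "nat (- m0)"] show ?thesis
    using ppow_0[OF contains_rat, of p] by (simp add: w_def)
qed

lemma one_dv_rat_emb_fraction:
  assumes "d \<noteq> 0" and "\<not> int p dvd d"
  shows "dv 1 (rat_emb (of_int n / of_int d) :: 'a)"
proof -
  have "prime (int p)" using prime by simp
  then have "coprime (int p) d" using assms(2) by (rule prime_imp_coprime)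
  then obtain u v where uv: "u * int p + v * d = 1" using bezout_int[of "int p" d] by auto
  define t where "t = v * d"
  have t: "t = 1 + int p * (- u)" using uv by (simp add: t_def algebra_simps)
  have "t \<noteq> 0"
  proof
    assume "t = 0"
    then have "int p * u = 1" using t by simp
    then have "int p dvd 1" by (metis dvd_triv_left)
    then show False using \<open>prime (int p)\<close> not_prime_unit by blast
  qed
  then have "(of_int n / of_int d :: rat) = of_int (n * v) * (1 / of_int t)"
    by (simp add: t_def)
  then show ?thesis
    using one_dv_mult[OF one_dv_of_int one_dv_rat_emb_inverse[OF t \<open>t \<noteq> 0\<close>]]
    by (simp only: rat_emb_mult[OF contains_rat] rat_emb_of_int[OF contains_rat])
qed

lemma dv_ppow_rat_emb_mult_iff:
  assumes "r \<noteq> 0"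
  shows "dv (ppow p m) (rat_emb r * a) \<longleftrightarrow> dv (ppow p (m - padic_val p r)) a"
proof -
  obtain n d where n: "\<not> int p dvd n" and d: "\<not> int p dvd d" "d \<noteq> 0"
    and r: "r = of_nat p powi padic_val p r * (of_int n / of_int d)"
    using rat_padic_decomposition[OF prime assms] by blast
  define u where "u = (of_int n / of_int d :: rat)"
  have "n \<noteq> 0" using r assms by auto
  have "u \<noteq> 0" using \<open>n \<noteq> 0\<close> d(2) by (simp add: u_def)
  have "dv 1 (rat_emb u :: 'a)" unfolding u_def using d(2,1) by (rule one_dv_rat_emb_fraction)
  moreover have "dv 1 (rat_emb (1 / u) :: 'a)"
    using one_dv_rat_emb_fraction[OF \<open>n \<noteq> 0\<close> n, of d] by (simp add: u_def)
  moreover have "rat_emb (1 / u) * rat_emb u = (1::'a)"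
    using rat_emb_inverse_mult[OF contains_rat \<open>u \<noteq> 0\<close>] .
  ultimately have unit: "dv x (rat_emb u * a) \<longleftrightarrow> dv x a" for x
    by (rule dv_unit_mult_iff)
  have "rat_emb r = ppow p (padic_val p r) * (rat_emb u :: 'a)"
    by (subst r) (simp only: u_def[symmetric] rat_emb_mult[OF contains_rat] ppow_def)
  then have "rat_emb r * a = ppow p (padic_val p r) * (rat_emb u * a)" by (simp add: mult.assoc)
  then show ?thesis
    using dv_ppow_shift_iff[of "m - padic_val p r" "padic_val p r" "rat_emb u * a"] unit by simp
qed

lemma norm_dv_cases:
  obtains "\<And>m. dv (ppow p m) a" and "norm_dv p dv a = 0"
  | M where "\<And>m. dv (ppow p m) a \<longleftrightarrow> m \<le> M" and "norm_dv p dv a = real p powr of_int (- M)"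
proof -
  have "{m. dv (ppow p m) a} = UNIV \<or> (\<exists>M. {m. dv (ppow p m) a} = {..M})"
  proof (rule int_downset_cases)
    show "{m. dv (ppow p m) a} \<noteq> {}" using ex_dv_ppow by blast
    show "k \<in> {m. dv (ppow p m) a}" if "m \<in> {m. dv (ppow p m) a}" and "k \<le> m" for m k
      using that dv_ppow_mono[of m a k] by simp
  qed
  then show ?thesis
  proof (elim disjE exE)
    assume "{m. dv (ppow p m) a} = UNIV"
    then have "\<And>m. dv (ppow p m) a" by auto
    moreover from this have "norm_dv p dv a = 0" by (rule norm_dv_eq_0)
    ultimately show thesis by (rule that(1))
  next
    fix M assume "{m. dv (ppow p m) a} = {..M}"
    then have "\<And>m. dv (ppow p m) a \<longleftrightarrow> m \<le> M" by auto
    moreover from this have "norm_dv p dv a = real p powr of_int (- M)" by (rule norm_dv_eq_powr)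
    ultimately show thesis by (rule that(2))
  qed
qed

lemma norm_dv_le_iff: "norm_dv p dv a \<le> real p powr m \<longleftrightarrow> dv (ppow p (- m)) a"
proof (cases rule: norm_dv_cases[of a])
  case (2 M)
  then show ?thesis using real_p_gt_1 by simp linarith
qed simp

lemma norm_dv_in_powers_or_zero: "norm_dv p dv a \<in> powers_or_zero (real p)"
proof (cases rule: norm_dv_cases[of a])
  case (2 M)
  then show ?thesis unfolding powers_or_zero_def by blast
qed (simp add: powers_or_zero_def)

lemma norm_dv_add: "norm_dv p dv (a + b) \<le> max (norm_dv p dv a) (norm_dv p dv b)"
proof (rule le_if_powr_bounds[OF real_p_gt_1])
  show "max (norm_dv p dv a) (norm_dv p dv b) \<in> powers_or_zero (real p)"
    by (intro powers_or_zero_max norm_dv_in_powers_or_zero)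
next
  fix m :: int
  assume "max (norm_dv p dv a) (norm_dv p dv b) \<le> real p powr m"
  then have "dv (ppow p (- m)) a" and "dv (ppow p (- m)) b" by (simp_all add: norm_dv_le_iff)
  then show "norm_dv p dv (a + b) \<le> real p powr m" by (simp add: norm_dv_le_iff dv_add)
qed

lemma dv_ppow_mult_if_norm_dv_eq_0:
  assumes "norm_dv p dv a = 0"
  shows "dv (ppow p m) (a * b)"
proof -
  obtain n where "dv (ppow p n) b" using ex_dv_ppow by blast
  moreover have "dv (ppow p (m - n)) a" using assms norm_dv_le_iff[of a "n - m"] by simp
  ultimately show ?thesis using dv_ppow_mult[of "m - n" a n b] by simp
qed

lemma norm_dv_mult: "norm_dv p dv (a * b) \<le> norm_dv p dv a * norm_dv p dv b"
proof (rule le_if_powr_bounds[OF real_p_gt_1])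
  show "norm_dv p dv a * norm_dv p dv b \<in> powers_or_zero (real p)"
    by (intro powers_or_zero_mult norm_dv_in_powers_or_zero)
next
  fix m :: int
  assume le: "norm_dv p dv a * norm_dv p dv b \<le> real p powr m"
  consider "norm_dv p dv a = 0" | "norm_dv p dv b = 0"
    | A B where "norm_dv p dv a = real p powr of_int A" "norm_dv p dv b = real p powr of_int B"
    using norm_dv_in_powers_or_zero[of a] norm_dv_in_powers_or_zero[of b]
    unfolding powers_or_zero_def by blast
  then have "dv (ppow p (- m)) (a * b)"
  proof cases
    case 1
    then show ?thesis by (rule dv_ppow_mult_if_norm_dv_eq_0)
  next
    case 2
    then show ?thesis using dv_ppow_mult_if_norm_dv_eq_0[of b "- m" a] by (simp add: mult.commute)
  next
    case (3 A B)
    then have "dv (ppow p (- A)) a" "dv (ppow p (- B)) b"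
      using norm_dv_le_iff[of a A] norm_dv_le_iff[of b B] by simp_all
    then have "dv (ppow p (- A - B)) (a * b)" using dv_ppow_mult by fastforce
    moreover have "- m \<le> - A - B"
      using le 3 real_p_gt_1 by (simp add: powr_add[symmetric])
    ultimately show ?thesis by (rule dv_ppow_mono)
  qed
  then show "norm_dv p dv (a * b) \<le> real p powr m" by (simp add: norm_dv_le_iff)
qed

lemma norm_dv_rat_emb_mult: "norm_dv p dv (rat_emb r * a) = padic_abs p r * norm_dv p dv a"
proof (cases "r = 0")
  case True
  then show ?thesis
    using rat_emb_of_int[OF contains_rat, of 0] by (simp add: padic_abs_def norm_dv_eq_0 dv_0)
next
  case False
  let ?k = "padic_val p r"
  have "padic_abs p r * norm_dv p dv a = norm_dv p dv (rat_emb r * a)"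
  proof (rule eq_if_same_powr_bounds[OF real_p_gt_1 _ norm_dv_in_powers_or_zero])
    show "padic_abs p r * norm_dv p dv a \<in> powers_or_zero (real p)"
      using False rangeI[of "\<lambda>n::int. real p powr of_int n" "- ?k"]
      by (intro powers_or_zero_mult norm_dv_in_powers_or_zero) (simp add: powers_or_zero_def padic_abs_def)
  next
    fix m :: int
    have "padic_abs p r * norm_dv p dv a \<le> real p powr m \<longleftrightarrow>
          norm_dv p dv a \<le> real p powr of_int (m + ?k)"
      using False real_p_gt_1
      by (simp add: padic_abs_def powr_minus divide_simps powr_add[symmetric] mult.commute)
    also have "\<dots> \<longleftrightarrow> norm_dv p dv (rat_emb r * a) \<le> real p powr m"
      using dv_ppow_rat_emb_mult_iff[OF False, of "- m" a] norm_dv_le_iff[of a "m + ?k"]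
      by (simp add: norm_dv_le_iff)
    finally show "padic_abs p r * norm_dv p dv a \<le> real p powr m \<longleftrightarrow>
          norm_dv p dv (rat_emb r * a) \<le> real p powr m" .
  qed
  then show ?thesis ..
qed

lemma norm_dv_one: "norm_dv p dv (1::'a) = 1"
  using norm_dv_eq_powr[of dv p 1 0] dv_ppow_one_iff p_gt_0 by simp

lemma norm_dv_rat_emb: "norm_dv p dv (rat_emb r :: 'a) = padic_abs p r"
  using norm_dv_rat_emb_mult[of r 1] norm_dv_one by simp

end

theorem lemma4p2:
  fixes dv :: "'a::comm_ring_1 \<Rightarrow> 'a \<Rightarrow> bool" and p :: nat
  assumes "prime p"
    and "contains_rat TYPE('a)"
    and "p_divisibility p dv"
    and "p_archimedean p dv"
  shows "(\<forall>a b. norm_dv p dv (a + b) \<le> max (norm_dv p dv a) (norm_dv p dv b)) \<and>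
         (\<forall>a b. norm_dv p dv (a * b) \<le> norm_dv p dv a * norm_dv p dv b) \<and>
         (\<forall>r. norm_dv p dv (rat_emb r :: 'a) = padic_abs p r) \<and>
         (\<forall>r a. norm_dv p dv (rat_emb r * a) = padic_abs p r * norm_dv p dv a)"
proof -
  interpret p_archimedean_divisibility p dv
    using assms by unfold_locales
  show ?thesis
    by (intro conjI allI norm_dv_add norm_dv_mult norm_dv_rat_emb norm_dv_rat_emb_mult)
qed

end
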